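(* In the bootstrap setting, let $|\alpha|+|\beta|+|\sigma|\le10$. For every $\eta>0$ there is $C_\eta>0$ (depending on $\eta,d_0,\gamma$) such that for every $T\in[0,T_{\mathrm{boot}})$, $$T^{\alpha,\beta,\sigma}_1\le\eta\big\|(1+t)^{-\frac{1+\delta}2}\langle v\rangle^{\frac12}W_{\alpha,\beta,\sigma}D^{\alpha,\beta,\sigma}g\big\|^2_{L^2([0,T];L^2_xL^2_v)}+C_\eta(1+T)^{2(1+\delta)}\sum_{\substack{|\alpha'|\le|\alpha|+1\\|\beta'|\le|\beta|-1}}\big\|(1+t)^{-\frac{1+\delta}2}\langle v\rangle^{\frac12}W_{\alpha',\beta',\sigma}D^{\alpha',\beta',\sigma}g\big\|^2_{L^2([0,T];L^2_xL^2_v)},$$ where $$T^{\alpha,\beta,\sigma}_1:=\sum_{\substack{|\alpha'|\le|\alpha|+1\\|\beta'|\le|\beta|-1}}\big\|W^2_{\alpha,\beta,\sigma}|D^{\alpha,\beta,\sigma}g|\,|D^{\alpha',\beta',\sigma}g|\big\|_{L^1([0,T];L^1_xL^1_v)}.$$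
   Context: Notation: $\langle z\rangle=\sqrt{1+|z|^2}$; repeated lower-case indices summed over $\{1,2,3\}$. Multi-indices $\alpha,\beta,\sigma\in(\mathbb N\cup\{0\})^3$ with $|\alpha|=\sum\alpha_l$; sums over primed multi-indices run over all multi-indices satisfying the displayed constraints. $D^{\alpha,\beta,\sigma}=\partial_x^\alpha\partial_v^\beta Y^\sigma$ with $Y^\sigma=\prod_lY_l^{\sigma_l}$, $Y_l=(t+1)\partial_{x_l}+\partial_{v_l}$. $\nu_{\alpha,\beta,\sigma}=20-\frac32(|\alpha|+|\sigma|)-\frac12|\beta|$, $\omega_{\alpha,\beta,\sigma}=20-\frac32|\sigma|-\frac12(|\alpha|+|\beta|)$, $W_{\alpha,\beta,\sigma}=\langle v\rangle^{\nu_{\alpha,\beta,\sigma}}\langle x-(t+1)v\rangle^{\omega_{\alpha,\beta,\sigma}}$. Mixed norms take $v$ first, then $x$, then $t$. Bootstrap setting: fix $\gamma\in[0,1)$, $d_0>0$, $\delta\in(0,\frac18)$; $a_{ij}(z)=(\delta_{ij}-z_iz_j/|z|^2)|z|^{\gamma+2}$, $c=\partial^2_{z_iz_j}a_{ij}$, $\bar a_{ij}=\int a_{ij}(v-v_* )f(t,x,v_* )dv_*$, $\bar c=\int c(v-v_* )f(t,x,v_* )dv_*$; Landau equation $\partial_tf+v_i\partial_{x_i}f=\bar a_{ij}\partial^2_{v_iv_j}f-\bar cf$; $d(t)=d_0(1+(1+t)^{-\delta})$. Energy norm for $T>0$: $\|h\|^2_{E_T}=\sum_{|\alpha|+|\beta|+|\sigma|\le10}(1+T)^{-|\beta|(1+\delta)}\big(\|W_{\alpha,\beta,\sigma}D^{\alpha,\beta,\sigma}h\|^2_{L^\infty([0,T);L^2_xL^2_v)}+\|\langle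 v\rangle^{1/2}W_{\alpha,\beta,\sigma}D^{\alpha,\beta,\sigma}h\|^2_{L^2([0,T);L^2_xL^2_v)}\big)$. $\epsilon_0=\epsilon_0(d_0,\gamma)>0$ is a fixed sufficiently small constant, $\epsilon\in[0,\epsilon_0]$, and $f_{\mathrm{ini}}$ satisfies $\sum_{|\alpha|+|\beta|+|\sigma|\le10}\|\langle v\rangle^{20-\frac32|\alpha|-\frac12|\beta|-\frac32|\sigma|}\langle x-v\rangle^{20-\frac32|\sigma|-\frac12|\beta|-\frac12|\alpha|}\partial_x^\alpha\partial_v^\beta(\partial_x+\partial_v)^\sigma(e^{2d_0\langle v\rangle}f_{\mathrm{ini}})\|^2_{L^2_xL^2_v}<\epsilon$. $T_{\mathrm{boot}}>0$ and $f:[0,T_{\mathrm{boot}})\times\mathbb R^3\times\mathbb R^3\to\mathbb R$ is a (sufficiently regular) solution of the Landau equation with $f\ge0$, $f(0)=f_{\mathrm{ini}}$; $g=e^{d(t)\langle v\rangle}f$; and $\|g\|_{E_T}\le\epsilon^{3/4}$ for all $T\in[0,T_{\mathrm{boot}})$. $A\lesssim B$ means $A\le CB$ with $C$ depending only on $d_0,\gamma$. *)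

theory Defs
  imports "HOL-Analysis.Analysis" "HOL-Probability.Essential_Supremum"
begin

definition jb :: "real^3 \<Rightarrow> real" where
  "jb z = sqrt (1 + (norm z)\<^sup>2)"

definition mlen :: "nat^3 \<Rightarrow> nat" where
  "mlen a = (\<Sum>l\<in>UNIV. a $ l)"

definition dz :: "3 \<Rightarrow> (real^3 \<Rightarrow> real) \<Rightarrow> real^3 \<Rightarrow> real" where
  "dz l F z = deriv (\<lambda>s. F (z + s *\<^sub>R axis l 1)) 0"

definition dxs :: "3 \<Rightarrow> (real^3 \<Rightarrow> real^3 \<Rightarrow> real) \<Rightarrow> real^3 \<Rightarrow> real^3 \<Rightarrow> real" where
  "dxs l F x v = deriv (\<lambda>s. F (x + s *\<^sub>R axis l 1) v) 0"

definition dvs :: "3 \<Rightarrow> (real^3 \<Rightarrow> real^3 \<Rightarrow> real) \<Rightarrow> real^3 \<Rightarrow> real^3 \<Rightarrow> real" where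
  "dvs l F x v = deriv (\<lambda>s. F x (v + s *\<^sub>R axis l 1)) 0"

datatype dir = Dt | Dx 3 | Dv 3

fun pdir :: "dir \<Rightarrow> (real \<Rightarrow> real^3 \<Rightarrow> real^3 \<Rightarrow> real) \<Rightarrow> real \<Rightarrow> real^3 \<Rightarrow> real^3 \<Rightarrow> real" where
  "pdir Dt h = (\<lambda>t x v. deriv (\<lambda>s. h s x v) t)"
| "pdir (Dx l) h = (\<lambda>t. dxs l (h t))"
| "pdir (Dv l) h = (\<lambda>t. dvs l (h t))"

definition applyD :: "dir list \<Rightarrow> (real \<Rightarrow> real^3 \<Rightarrow> real^3 \<Rightarrow> real) \<Rightarrow> real \<Rightarrow> real^3 \<Rightarrow> real^3 \<Rightarrow> real" where
  "applyD ds h = foldr pdir ds h"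

fun slice_diff :: "dir \<Rightarrow> (real \<Rightarrow> real^3 \<Rightarrow> real^3 \<Rightarrow> real) \<Rightarrow> real \<Rightarrow> real^3 \<Rightarrow> real^3 \<Rightarrow> bool" where
  "slice_diff Dt h t x v = ((\<lambda>s. h s x v) differentiable (at t))"
| "slice_diff (Dx l) h t x v = ((\<lambda>s. h t (x + s *\<^sub>R axis l 1) v) differentiable (at 0))"
| "slice_diff (Dv l) h t x v = ((\<lambda>s. h t x (v + s *\<^sub>R axis l 1)) differentiable (at 0))"

text \<open>"Sufficiently regular" on [0,Tb) x R^3 x R^3: all partial derivatives of all orders
  exist and are continuous in the interior (0,Tb) x R^6 (i.e. h is C^infinity there), and all
  partial derivatives in x and v of all orders exist and are continuous up to t = 0.\<close>
definition regular :: "real \<Rightarrow> (real \<Rightarrow> real^3 \<Rightarrow> real^3 \<Rightarrow> real) \<Rightarrow> bool" where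
  "regular Tb h \<longleftrightarrow>
     (\<forall>ds. continuous_on ({0<..<Tb} \<times> (UNIV :: ((real^3) \<times> (real^3)) set))
              (\<lambda>p. applyD ds h (fst p) (fst (snd p)) (snd (snd p)))) \<and>
     (\<forall>ds d t x v. 0 < t \<and> t < Tb \<longrightarrow> slice_diff d (applyD ds h) t x v) \<and>
     (\<forall>ds. Dt \<notin> set ds \<longrightarrow> continuous_on ({0..<Tb} \<times> (UNIV :: ((real^3) \<times> (real^3)) set))
              (\<lambda>p. applyD ds h (fst p) (fst (snd p)) (snd (snd p)))) \<and>
     (\<forall>ds d t x v. Dt \<notin> set ds \<and> d \<noteq> Dt \<and> 0 \<le> t \<and> t < Tb \<longrightarrow> slice_diff d (applyD ds h) t x v)"

definition mop :: "(3 \<Rightarrow> 'f \<Rightarrow> 'f) \<Rightarrow> nat^3 \<Rightarrow> 'f \<Rightarrow> 'f" where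
  "mop P a F = (P 1 ^^ (a $ 1)) ((P 2 ^^ (a $ 2)) ((P 3 ^^ (a $ 3)) F))"

definition Yop :: "3 \<Rightarrow> (real \<Rightarrow> real^3 \<Rightarrow> real^3 \<Rightarrow> real) \<Rightarrow> real \<Rightarrow> real^3 \<Rightarrow> real^3 \<Rightarrow> real" where
  "Yop l h = (\<lambda>t x v. (t + 1) * pdir (Dx l) h t x v + pdir (Dv l) h t x v)"

definition Dop :: "nat^3 \<Rightarrow> nat^3 \<Rightarrow> nat^3 \<Rightarrow> (real \<Rightarrow> real^3 \<Rightarrow> real^3 \<Rightarrow> real) \<Rightarrow> real \<Rightarrow> real^3 \<Rightarrow> real^3 \<Rightarrow> real" where
  "Dop a b s h = mop (\<lambda>l. pdir (Dx l)) a (mop (\<lambda>l. pdir (Dv l)) b (mop Yop s h))"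

definition Zs :: "3 \<Rightarrow> (real^3 \<Rightarrow> real^3 \<Rightarrow> real) \<Rightarrow> real^3 \<Rightarrow> real^3 \<Rightarrow> real" where
  "Zs l F = (\<lambda>x v. dxs l F x v + dvs l F x v)"

definition Dini :: "nat^3 \<Rightarrow> nat^3 \<Rightarrow> nat^3 \<Rightarrow> (real^3 \<Rightarrow> real^3 \<Rightarrow> real) \<Rightarrow> real^3 \<Rightarrow> real^3 \<Rightarrow> real" where
  "Dini a b s F = mop dxs a (mop dvs b (mop Zs s F))"

definition nu :: "nat^3 \<Rightarrow> nat^3 \<Rightarrow> nat^3 \<Rightarrow> real" where
  "nu a b s = 20 - 3/2 * (real (mlen a) + real (mlen s)) - 1/2 * real (mlen b)"

definition om :: "nat^3 \<Rightarrow> nat^3 \<Rightarrow> nat^3 \<Rightarrow> real" where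
  "om a b s = 20 - 3/2 * real (mlen s) - 1/2 * (real (mlen a) + real (mlen b))"

definition W :: "nat^3 \<Rightarrow> nat^3 \<Rightarrow> nat^3 \<Rightarrow> real \<Rightarrow> real^3 \<Rightarrow> real^3 \<Rightarrow> real" where
  "W a b s t x v = jb v powr nu a b s * jb (x - (t + 1) *\<^sub>R v) powr om a b s"

definition sq_xv :: "(real^3 \<Rightarrow> real^3 \<Rightarrow> real) \<Rightarrow> ennreal" where
  "sq_xv F = (\<integral>\<^sup>+ x. (\<integral>\<^sup>+ v. ennreal ((F x v)\<^sup>2) \<partial>lborel) \<partial>lborel)"

definition sq_txv :: "real set \<Rightarrow> (real \<Rightarrow> real^3 \<Rightarrow> real^3 \<Rightarrow> real) \<Rightarrow> ennreal" where
  "sq_txv I h = (\<integral>\<^sup>+ t. indicator I t * sq_xv (h t) \<partial>lborel)"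

definition L1_txv :: "real set \<Rightarrow> (real \<Rightarrow> real^3 \<Rightarrow> real^3 \<Rightarrow> real) \<Rightarrow> ennreal" where
  "L1_txv I h = (\<integral>\<^sup>+ t. indicator I t *
       (\<integral>\<^sup>+ x. (\<integral>\<^sup>+ v. ennreal \<bar>h t x v\<bar> \<partial>lborel) \<partial>lborel) \<partial>lborel)"

definition idx10 :: "((nat^3) \<times> (nat^3) \<times> (nat^3)) set" where
  "idx10 = {(a, b, s). mlen a + mlen b + mlen s \<le> 10}"

definition Enorm2 :: "real \<Rightarrow> real \<Rightarrow> (real \<Rightarrow> real^3 \<Rightarrow> real^3 \<Rightarrow> real) \<Rightarrow> ennreal" where
  "Enorm2 \<delta> T h = (\<Sum>(a, b, s)\<in>idx10.
      ennreal ((1 + T) powr (- real (mlen b) * (1 + \<delta>))) *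
      (esssup (restrict_space lborel {0..<T})
          (\<lambda>t. sq_xv (\<lambda>x v. W a b s t x v * Dop a b s h t x v))
       + sq_txv {0..<T} (\<lambda>t x v. jb v powr (1/2) * W a b s t x v * Dop a b s h t x v)))"

definition acoef :: "real \<Rightarrow> 3 \<Rightarrow> 3 \<Rightarrow> real^3 \<Rightarrow> real" where
  "acoef \<gamma> i j z = ((if i = j then 1 else 0) - z $ i * z $ j / (norm z)\<^sup>2) * norm z powr (\<gamma> + 2)"

definition ccoef :: "real \<Rightarrow> real^3 \<Rightarrow> real" where
  "ccoef \<gamma> z = (\<Sum>i\<in>UNIV. \<Sum>j\<in>UNIV. dz i (dz j (acoef \<gamma> i j)) z)"

definition abar :: "real \<Rightarrow> (real \<Rightarrow> real^3 \<Rightarrow> real^3 \<Rightarrow> real) \<Rightarrow> 3 \<Rightarrow> 3 \<Rightarrow> real \<Rightarrow> real^3 \<Rightarrow> real^3 \<Rightarrow> real" where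
  "abar \<gamma> f i j t x v = (\<integral>w. acoef \<gamma> i j (v - w) * f t x w \<partial>lborel)"

definition cbar :: "real \<Rightarrow> (real \<Rightarrow> real^3 \<Rightarrow> real^3 \<Rightarrow> real) \<Rightarrow> real \<Rightarrow> real^3 \<Rightarrow> real^3 \<Rightarrow> real" where
  "cbar \<gamma> f t x v = (\<integral>w. ccoef \<gamma> (v - w) * f t x w \<partial>lborel)"

definition landau_solution :: "real \<Rightarrow> real \<Rightarrow> (real \<Rightarrow> real^3 \<Rightarrow> real^3 \<Rightarrow> real) \<Rightarrow> bool" where
  "landau_solution \<gamma> Tb f \<longleftrightarrow>
     regular Tb f \<and>
     (\<forall>t x v. 0 \<le> t \<and> t < Tb \<longrightarrow>
        (\<forall>i j. integrable lborel (\<lambda>w. acoef \<gamma> i j (v - w) * f t x w)) \<and>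
        integrable lborel (\<lambda>w. ccoef \<gamma> (v - w) * f t x w)) \<and>
     (\<forall>t x v. 0 < t \<and> t < Tb \<longrightarrow>
        pdir Dt f t x v + (\<Sum>i\<in>UNIV. v $ i * pdir (Dx i) f t x v)
          = (\<Sum>i\<in>UNIV. \<Sum>j\<in>UNIV. abar \<gamma> f i j t x v * pdir (Dv i) (pdir (Dv j) f) t x v)
            - cbar \<gamma> f t x v * f t x v)"

definition dfun :: "real \<Rightarrow> real \<Rightarrow> real \<Rightarrow> real" where
  "dfun d0 \<delta> t = d0 * (1 + (1 + t) powr (- \<delta>))"

definition gfun :: "real \<Rightarrow> real \<Rightarrow> (real \<Rightarrow> real^3 \<Rightarrow> real^3 \<Rightarrow> real) \<Rightarrow> real \<Rightarrow> real^3 \<Rightarrow> real^3 \<Rightarrow> real" where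
  "gfun d0 \<delta> f t x v = exp (dfun d0 \<delta> t * jb v) * f t x v"

definition init_small :: "real \<Rightarrow> real \<Rightarrow> (real^3 \<Rightarrow> real^3 \<Rightarrow> real) \<Rightarrow> bool" where
  "init_small d0 \<epsilon> fini \<longleftrightarrow>
     (\<Sum>(a, b, s)\<in>idx10.
        sq_xv (\<lambda>x v. jb v powr (20 - 3/2 * real (mlen a) - 1/2 * real (mlen b) - 3/2 * real (mlen s))
                   * jb (x - v) powr (20 - 3/2 * real (mlen s) - 1/2 * real (mlen b) - 1/2 * real (mlen a))
                   * Dini a b s (\<lambda>x v. exp (2 * d0 * jb v) * fini x v) x v))
     < ennreal \<epsilon>"

definition bootstrap :: "real \<Rightarrow> real \<Rightarrow> real \<Rightarrow> real \<Rightarrow> real \<Rightarrow> (real^3 \<Rightarrow> real^3 \<Rightarrow> real)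
    \<Rightarrow> real \<Rightarrow> (real \<Rightarrow> real^3 \<Rightarrow> real^3 \<Rightarrow> real) \<Rightarrow> bool" where
  "bootstrap \<gamma> d0 \<delta> \<epsilon>0 \<epsilon> fini Tb f \<longleftrightarrow>
     0 \<le> \<gamma> \<and> \<gamma> < 1 \<and> 0 < d0 \<and> 0 < \<delta> \<and> \<delta> < 1/8 \<and>
     0 \<le> \<epsilon> \<and> \<epsilon> \<le> \<epsilon>0 \<and> init_small d0 \<epsilon> fini \<and>
     0 < Tb \<and> landau_solution \<gamma> Tb f \<and>
     (\<forall>t x v. 0 \<le> t \<and> t < Tb \<longrightarrow> f t x v \<ge> 0) \<and>
     (\<forall>x v. f 0 x v = fini x v) \<and>
     (\<forall>T. 0 \<le> T \<and> T < Tb \<longrightarrow> Enorm2 \<delta> T (gfun d0 \<delta> f) \<le> ennreal ((\<epsilon> powr (3/4))\<^sup>2))"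

end

theory Submission
  imports Defs
begin

text \<open>
  If |alpha'| <= |alpha| + 1 and |beta'| <= |beta| - 1, then nu drops by at most 1 and omega does
  not increase when passing from (alpha', beta', sigma) to (alpha, beta, sigma), so
  W_{alpha,beta,sigma} <= <v> W_{alpha',beta',sigma}. With phi_{alpha,beta} the integrand
  (1+t)^(-(1+delta)/2) <v>^(1/2) W D g of the right-hand side, the integrand of T_1 is therefore
  at most (1+t)^(1+delta) |phi_{alpha,beta}| |phi_{alpha',beta'}|, and Young's inequality with weight eta/N,
  where N bounds the number of pairs (alpha', beta'), gives the claim with C = N/(4 eta), since
  (1+t)^(2(1+delta)) <= (1+T)^(2(1+delta)). No smallness of epsilon is used.

  Splitting the integral of the sum requires the derivatives D g to be measurable. This follows from
  the regularity of f, because g = exp(d(t) <v>) f lies in a class of functions that are measurable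
  and differentiable to every order in x and v on [0, T_boot) x R^6, and this class is closed under
  sums, products, exp, real powers and the derivations d_x, d_v and Y.
\<close>

type_synonym txv_fun = "real \<Rightarrow> real^3 \<Rightarrow> real^3 \<Rightarrow> real"

section \<open>Iterated integrals in time, position and velocity\<close>

lemma nn_integral_iterated3:
  fixes F :: "'a::euclidean_space \<Rightarrow> 'b::euclidean_space \<Rightarrow> 'c::euclidean_space \<Rightarrow> ennreal"
  assumes "(\<lambda>(t, x, v). F t x v) \<in> borel_measurable borel"
  shows "(\<integral>\<^sup>+t. \<integral>\<^sup>+x. \<integral>\<^sup>+v. F t x v \<partial>lborel \<partial>lborel \<partial>lborel) = (\<integral>\<^sup>+(t, x, v). F t x v \<partial>lborel)"
proof -
  have m: "(\<lambda>(t, x, v). F t x v) \<in> borel_measurable (lborel \<Otimes>\<^sub>M (lborel \<Otimes>\<^sub>M lborel))"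
    using assms by (simp add: lborel_prod)
  have "(\<integral>\<^sup>+x. \<integral>\<^sup>+v. F t x v \<partial>lborel \<partial>lborel) = (\<integral>\<^sup>+(x, v). F t x v \<partial>(lborel \<Otimes>\<^sub>M lborel))" for t
    using lborel.nn_integral_fst[of "\<lambda>(x, v). F t x v" lborel] measurable_Pair2[OF m, of t]
    by simp
  then have "(\<integral>\<^sup>+t. \<integral>\<^sup>+x. \<integral>\<^sup>+v. F t x v \<partial>lborel \<partial>lborel \<partial>lborel)
      = (\<integral>\<^sup>+t. \<integral>\<^sup>+(x, v). F t x v \<partial>(lborel \<Otimes>\<^sub>M lborel) \<partial>lborel)" by simp
  also have "\<dots> = (\<integral>\<^sup>+(t, x, v). F t x v \<partial>(lborel \<Otimes>\<^sub>M (lborel \<Otimes>\<^sub>M lborel)))"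
    using lborel_pair.P.nn_integral_fst[of "\<lambda>(t, x, v). F t x v" lborel] m by simp
  finally show ?thesis by (simp add: lborel_prod)
qed

lemma nn_integral_iterated3_linear:
  fixes F G :: "'a::euclidean_space \<Rightarrow> 'b::euclidean_space \<Rightarrow> 'c::euclidean_space \<Rightarrow> ennreal"
  assumes mF: "(\<lambda>(t, x, v). F t x v) \<in> borel_measurable borel"
    and mG: "(\<lambda>(t, x, v). G t x v) \<in> borel_measurable borel"
  shows "(\<integral>\<^sup>+t. \<integral>\<^sup>+x. \<integral>\<^sup>+v. c * F t x v + d * G t x v \<partial>lborel \<partial>lborel \<partial>lborel)
       = c * (\<integral>\<^sup>+t. \<integral>\<^sup>+x. \<integral>\<^sup>+v. F t x v \<partial>lborel \<partial>lborel \<partial>lborel)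
         + d * (\<integral>\<^sup>+t. \<integral>\<^sup>+x. \<integral>\<^sup>+v. G t x v \<partial>lborel \<partial>lborel \<partial>lborel)"
proof -
  have mFG: "(\<lambda>(t, x, v). c * F t x v + d * G t x v) \<in> borel_measurable borel"
    using mF mG by (simp add: split_beta')
  show ?thesis
    using mF mG
    unfolding nn_integral_iterated3[OF mF] nn_integral_iterated3[OF mG]
      nn_integral_iterated3[OF mFG]
    by (simp add: split_beta' nn_integral_add nn_integral_cmult)
qed

lemma borel_measurable_fst_comp:
  fixes c :: "'a::topological_space \<Rightarrow> 'c::topological_space"
  assumes "c \<in> borel_measurable borel"
  shows "(\<lambda>p::'a \<times> 'b::topological_space. c (fst p)) \<in> borel_measurable borel"
  using continuous_on_fst[OF continuous_on_id]
  by (rule measurable_compose[OF borel_measurable_continuous_onI assms])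

lemma borel_measurable_indicator_time_mult:
  fixes h :: "real \<Rightarrow> 'a::topological_space \<Rightarrow> 'b::topological_space \<Rightarrow> real"
  assumes "I \<in> sets borel" "(\<lambda>(t, x, v). h t x v) \<in> borel_measurable borel"
  shows "(\<lambda>(t, x, v). indicator I t * h t x v) \<in> borel_measurable borel"
proof -
  have "(\<lambda>p::real \<times> 'a \<times> 'b. indicator I (fst p) :: real) \<in> borel_measurable borel"
    using assms(1) by (intro borel_measurable_fst_comp) simp
  from borel_measurable_times[OF this assms(2)[unfolded split_beta']] show ?thesis
    by (simp add: split_beta')
qed

lemma slab_borel: "({0..<Tb} \<times> UNIV :: (real \<times> 'a::second_countable_topology) set) \<in> sets borel"
proof -
  have "{0..<Tb} \<times> UNIV = ({0..} \<times> UNIV) \<inter> ({..<Tb} \<times> (UNIV :: 'a set))" by auto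
  then show ?thesis
    by (simp only:) (intro sets.Int borel_closed closed_Times borel_open open_Times; simp)
qed

lemma L1_txv_le_sq_txv:
  fixes H \<phi> \<psi> :: txv_fun
  assumes bound: "\<And>t x v. t \<in> I \<Longrightarrow> \<bar>H t x v\<bar> \<le> c * (\<phi> t x v)\<^sup>2 + d * (\<psi> t x v)\<^sup>2"
    and "0 \<le> c" "0 \<le> d"
    and m\<phi>: "(\<lambda>(t, x, v). indicator I t * \<phi> t x v) \<in> borel_measurable borel"
    and m\<psi>: "(\<lambda>(t, x, v). indicator I t * \<psi> t x v) \<in> borel_measurable borel"
  shows "L1_txv I H \<le> ennreal c * sq_txv I \<phi> + ennreal d * sq_txv I \<psi>"
proof -
  define F where "F \<phi> t x v = ennreal ((indicator I t * \<phi> t x v)\<^sup>2)" for \<phi> :: txv_fun and t x v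
  have sq_txv_eq: "sq_txv I \<phi> = (\<integral>\<^sup>+t. \<integral>\<^sup>+x. \<integral>\<^sup>+v. F \<phi> t x v \<partial>lborel \<partial>lborel \<partial>lborel)" for \<phi>
    unfolding sq_txv_def sq_xv_def F_def by (intro nn_integral_cong) (auto simp: indicator_def)
  have mF: "(\<lambda>(t, x, v). F \<phi> t x v) \<in> borel_measurable borel"
    if "(\<lambda>(t, x, v). indicator I t * \<phi> t x v) \<in> borel_measurable borel" for \<phi>
    using that unfolding F_def by (simp add: split_beta')
  have "L1_txv I H \<le> (\<integral>\<^sup>+t. \<integral>\<^sup>+x. \<integral>\<^sup>+v. ennreal c * F \<phi> t x v + ennreal d * F \<psi> t x v
                       \<partial>lborel \<partial>lborel \<partial>lborel)"
    unfolding L1_txv_def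
  proof (intro nn_integral_mono)
    fix t
    show "indicator I t * (\<integral>\<^sup>+x. \<integral>\<^sup>+v. ennreal \<bar>H t x v\<bar> \<partial>lborel \<partial>lborel)
        \<le> (\<integral>\<^sup>+x. \<integral>\<^sup>+v. ennreal c * F \<phi> t x v + ennreal d * F \<psi> t x v \<partial>lborel \<partial>lborel)"
    proof (cases "t \<in> I")
      case True
      have "ennreal \<bar>H t x v\<bar> \<le> ennreal c * F \<phi> t x v + ennreal d * F \<psi> t x v" for x v
      proof -
        have "ennreal \<bar>H t x v\<bar> \<le> ennreal (c * (\<phi> t x v)\<^sup>2 + d * (\<psi> t x v)\<^sup>2)"
          by (rule ennreal_leI) (rule bound[OF True])
        then show ?thesis
          using True \<open>0 \<le> c\<close> \<open>0 \<le> d\<close> by (simp add: F_def ennreal_mult)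
      qed
      then show ?thesis using True by (simp add: nn_integral_mono)
    qed simp
  qed
  also have "\<dots> = ennreal c * sq_txv I \<phi> + ennreal d * sq_txv I \<psi>"
    unfolding sq_txv_eq by (rule nn_integral_iterated3_linear[OF mF[OF m\<phi>] mF[OF m\<psi>]])
  finally show ?thesis .
qed

section \<open>The pointwise estimate\<close>

lemma one_le_jb: "1 \<le> jb z"
  unfolding jb_def by simp

lemma W_le_jb_mult_W:
  assumes "mlen a' \<le> mlen a + 1" "mlen b' + 1 \<le> mlen b"
  shows "W a b s t x v \<le> jb v * W a' b' s t x v"
proof -
  have "real (mlen a') \<le> real (mlen a) + 1" "real (mlen b') + 1 \<le> real (mlen b)"
    using assms by linarith+
  then have nu: "nu a b s \<le> 1 + nu a' b' s" and om: "om a b s \<le> om a' b' s"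
    unfolding nu_def om_def by (auto simp: field_simps)
  have "jb v powr nu a b s \<le> jb v powr (1 + nu a' b' s)"
    using nu one_le_jb by (rule powr_mono)
  also have "\<dots> = jb v * jb v powr nu a' b' s"
    using one_le_jb[of v] by (simp add: powr_add)
  finally have "jb v powr nu a b s \<le> jb v * jb v powr nu a' b' s" .
  moreover have "jb (x - (t + 1) *\<^sub>R v) powr om a b s \<le> jb (x - (t + 1) *\<^sub>R v) powr om a' b' s"
    using om one_le_jb by (rule powr_mono)
  ultimately show ?thesis
    unfolding W_def mult.assoc[symmetric] using one_le_jb[of v] by (intro mult_mono) simp_all
qed

lemma mult_le_weighted_squares:
  fixes e u w :: "'a::linordered_field"
  assumes "0 < e"
  shows "u * w \<le> e * u\<^sup>2 + w\<^sup>2 / (4 * e)"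
proof -
  have "0 \<le> (2 * e * u - w)\<^sup>2 / (4 * e)" using assms by simp
  also have "\<dots> = e * u\<^sup>2 + w\<^sup>2 / (4 * e) - u * w"
    using assms by (simp add: field_simps power2_eq_square)
  finally show ?thesis by simp
qed

definition dissip_density :: "real \<Rightarrow> nat^3 \<Rightarrow> nat^3 \<Rightarrow> nat^3 \<Rightarrow> txv_fun \<Rightarrow> txv_fun" where
  "dissip_density \<delta> a b s g = (\<lambda>t x v. (1 + t) powr (- (1 + \<delta>) / 2) * jb v powr (1/2)
      * W a b s t x v * Dop a b s g t x v)"

lemma weighted_product_le:
  assumes ab: "mlen a' \<le> mlen a + 1" "mlen b' + 1 \<le> mlen b"
    and "0 < e" "0 \<le> t" "t \<le> T" "-1 \<le> \<delta>"
  shows "\<bar>(W a b s t x v)\<^sup>2 * \<bar>Dop a b s g t x v\<bar> * \<bar>Dop a' b' s g t x v\<bar>\<bar>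
    \<le> e * (dissip_density \<delta> a b s g t x v)\<^sup>2
      + (1 + T) powr (2 * (1 + \<delta>)) / (4 * e) * (dissip_density \<delta> a' b' s g t x v)\<^sup>2"
proof -
  let ?\<phi> = "dissip_density \<delta> a b s g t x v" and ?\<phi>' = "dissip_density \<delta> a' b' s g t x v"
  define A where "A = (1 + t) powr (- (1 + \<delta>) / 2)"
  define P where "P = (1 + t) powr (1 + \<delta>)"
  define r where "r = jb v powr (1/2)"
  define W1 where "W1 = W a b s t x v"
  define W2 where "W2 = W a' b' s t x v"
  define D1 where "D1 = \<bar>Dop a b s g t x v\<bar>"
  define D2 where "D2 = \<bar>Dop a' b' s g t x v\<bar>"
  have "A * A * P = 1"
    using \<open>0 \<le> t\<close> by (simp add: A_def P_def powr_add[symmetric])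
  moreover have "r * r = jb v"
    using one_le_jb[of v] by (simp add: r_def powr_add[symmetric])
  moreover have "\<bar>?\<phi>\<bar> = A * r * W1 * D1" "\<bar>?\<phi>'\<bar> = A * r * W2 * D2"
    by (simp_all add: dissip_density_def A_def r_def W1_def W2_def D1_def D2_def W_def abs_mult)
  ultimately have \<phi>\<phi>': "\<bar>?\<phi>\<bar> * (P * \<bar>?\<phi>'\<bar>) = W1 * D1 * D2 * (jb v * W2)"
    by (metis (no_types, opaque_lifting) mult.commute mult.left_commute mult_1)
  have "\<bar>(W a b s t x v)\<^sup>2 * \<bar>Dop a b s g t x v\<bar> * \<bar>Dop a' b' s g t x v\<bar>\<bar> = W1 * D1 * D2 * W1"
    by (simp add: W1_def D1_def D2_def abs_mult power2_eq_square mult_ac)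
  also have "\<dots> \<le> W1 * D1 * D2 * (jb v * W2)"
  proof (rule mult_left_mono)
    show "W1 \<le> jb v * W2"
      unfolding W1_def W2_def using ab by (rule W_le_jb_mult_W)
    show "0 \<le> W1 * D1 * D2"
      by (simp add: W1_def W_def D1_def D2_def)
  qed
  also have "\<dots> = \<bar>?\<phi>\<bar> * (P * \<bar>?\<phi>'\<bar>)"
    by (rule \<phi>\<phi>'[symmetric])
  also have "\<dots> \<le> e * ?\<phi>\<^sup>2 + P\<^sup>2 / (4 * e) * ?\<phi>'\<^sup>2"
    using mult_le_weighted_squares[OF \<open>0 < e\<close>, of "\<bar>?\<phi>\<bar>" "P * \<bar>?\<phi>'\<bar>"]
    by (simp add: power_mult_distrib)
  also have "\<dots> \<le> e * ?\<phi>\<^sup>2 + (1 + T) powr (2 * (1 + \<delta>)) / (4 * e) * ?\<phi>'\<^sup>2"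
  proof -
    have "P\<^sup>2 = (1 + t) powr (2 * (1 + \<delta>))"
      using \<open>0 \<le> t\<close> by (simp add: P_def power2_eq_square powr_add[symmetric])
    also have "\<dots> \<le> (1 + T) powr (2 * (1 + \<delta>))"
      using assms by (intro powr_mono2) auto
    finally show ?thesis
      using \<open>0 < e\<close> by (intro add_left_mono mult_right_mono divide_right_mono) auto
  qed
  finally show ?thesis .
qed

section \<open>Measurability of the derivatives of g\<close>

definition slice :: "dir \<Rightarrow> txv_fun \<Rightarrow> real \<Rightarrow> real^3 \<Rightarrow> real^3 \<Rightarrow> real \<Rightarrow> real" where
  "slice d h t x v = (case d of
      Dt \<Rightarrow> (\<lambda>s. h (t + s) x v)
    | Dx l \<Rightarrow> (\<lambda>s. h t (x + s *\<^sub>R axis l 1) v)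
    | Dv l \<Rightarrow> (\<lambda>s. h t x (v + s *\<^sub>R axis l 1)))"

lemma slice_0 [simp]: "slice d h t x v 0 = h t x v"
  by (cases d) (auto simp: slice_def)

lemma slice_comp1: "slice d (\<lambda>t x v. F (h t x v)) t x v = (\<lambda>s. F (slice d h t x v s))"
  by (cases d) (auto simp: slice_def)

lemma slice_comp2:
  "slice d (\<lambda>t x v. F (h1 t x v) (h2 t x v)) t x v
    = (\<lambda>s. F (slice d h1 t x v s) (slice d h2 t x v s))"
  by (cases d) (auto simp: slice_def)

lemma slice_time_fun: "d \<noteq> Dt \<Longrightarrow> slice d (\<lambda>t x v. c t) t x v = (\<lambda>s. c t)"
  by (cases d) (auto simp: slice_def)

lemma slice_cong: "d \<noteq> Dt \<Longrightarrow> (\<And>x v. h' t x v = h t x v) \<Longrightarrow> slice d h' t x v = slice d h t x v"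
  by (cases d) (auto simp: slice_def)

lemma pdir_eq_deriv_slice: "d \<noteq> Dt \<Longrightarrow> pdir d h t x v = deriv (slice d h t x v) 0"
  by (cases d) (auto simp: slice_def dxs_def dvs_def)

lemma slice_diff_iff: "d \<noteq> Dt \<Longrightarrow> slice_diff d h t x v \<longleftrightarrow> slice d h t x v differentiable (at 0)"
  by (cases d) (auto simp: slice_def)

definition xv_diff :: "real \<Rightarrow> txv_fun \<Rightarrow> bool" where
  "xv_diff Tb h \<longleftrightarrow> (\<lambda>(t, x, v). indicator {0..<Tb} t * h t x v) \<in> borel_measurable borel \<and>
     (\<forall>d t x v. d \<noteq> Dt \<longrightarrow> 0 \<le> t \<longrightarrow> t < Tb \<longrightarrow> slice d h t x v differentiable (at 0))"

lemma xv_diff_measurable: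
  "xv_diff Tb h \<Longrightarrow> (\<lambda>(t, x, v). indicator {0..<Tb} t * h t x v) \<in> borel_measurable borel"
  unfolding xv_diff_def by blast

lemma xv_diff_has_derivative:
  assumes "xv_diff Tb h" "d \<noteq> Dt" "0 \<le> t" "t < Tb"
  shows "(slice d h t x v has_real_derivative pdir d h t x v) (at 0)"
  using assms unfolding xv_diff_def pdir_eq_deriv_slice[OF assms(2)]
  by (simp add: DERIV_deriv_iff_real_differentiable)

lemma xv_diffI:
  assumes "(\<lambda>(t, x, v). indicator {0..<Tb} t * h t x v) \<in> borel_measurable borel"
    and "\<And>d t x v. d \<noteq> Dt \<Longrightarrow> 0 \<le> t \<Longrightarrow> t < Tb \<Longrightarrow> slice d h t x v differentiable (at 0)"
  shows "xv_diff Tb h"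
  using assms unfolding xv_diff_def by blast

lemma xv_diff_cong:
  assumes "xv_diff Tb h" "\<And>t x v. 0 \<le> t \<Longrightarrow> t < Tb \<Longrightarrow> h' t x v = h t x v"
  shows "xv_diff Tb h'"
proof (rule xv_diffI)
  have "(\<lambda>(t, x, v). indicator {0..<Tb} t * h' t x v)
      = (\<lambda>(t, x, v). indicator {0..<Tb} t * h t x v)"
    using assms(2) by (auto simp: indicator_def)
  then show "(\<lambda>(t, x, v). indicator {0..<Tb} t * h' t x v) \<in> borel_measurable borel"
    using xv_diff_measurable[OF assms(1)] by simp
  show "slice d h' t x v differentiable (at 0)" if "d \<noteq> Dt" "0 \<le> t" "t < Tb" for d t x v
    using assms that slice_cong[OF that(1), of h' t h] unfolding xv_diff_def by auto
qed

lemma pdir_cong: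
  assumes "d \<noteq> Dt" "\<And>t x v. 0 \<le> t \<Longrightarrow> t < Tb \<Longrightarrow> h' t x v = h t x v" "0 \<le> t" "t < Tb"
  shows "pdir d h' t x v = pdir d h t x v"
  using slice_cong[OF assms(1), of h' t h] assms by (simp add: pdir_eq_deriv_slice)

fun xv_regular :: "real \<Rightarrow> nat \<Rightarrow> txv_fun \<Rightarrow> bool" where
  "xv_regular Tb 0 h = xv_diff Tb h"
| "xv_regular Tb (Suc n) h = (xv_diff Tb h \<and> (\<forall>d. d \<noteq> Dt \<longrightarrow> xv_regular Tb n (pdir d h)))"

lemma xv_regular_Suc_imp: "xv_regular Tb (Suc n) h \<Longrightarrow> xv_regular Tb n h"
  by (induction n arbitrary: h) auto

lemma xv_regular_cong:
  "xv_regular Tb n h \<Longrightarrow> (\<And>t x v. 0 \<le> t \<Longrightarrow> t < Tb \<Longrightarrow> h' t x v = h t x v) \<Longrightarrow> xv_regular Tb n h'"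
proof (induction n arbitrary: h h')
  case 0
  then show ?case using xv_diff_cong by simp
next
  case (Suc n)
  have "xv_regular Tb n (pdir d h')" if "d \<noteq> Dt" for d
    using Suc.IH[of "pdir d h" "pdir d h'"] Suc.prems that pdir_cong[OF that Suc.prems(2)] by simp
  then show ?case using Suc.prems xv_diff_cong[of Tb h h'] by simp
qed

lemma xv_diff_add:
  assumes "xv_diff Tb h1" "xv_diff Tb h2"
  shows "xv_diff Tb (\<lambda>t x v. h1 t x v + h2 t x v)"
proof (rule xv_diffI)
  have "(\<lambda>(t, x, v). indicator {0..<Tb} t * (h1 t x v + h2 t x v))
      = (\<lambda>p. (\<lambda>(t, x, v). indicator {0..<Tb} t * h1 t x v) p
             + (\<lambda>(t, x, v). indicator {0..<Tb} t * h2 t x v) p)"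
    by (auto simp: algebra_simps)
  then show "(\<lambda>(t, x, v). indicator {0..<Tb} t * (h1 t x v + h2 t x v)) \<in> borel_measurable borel"
    using assms[THEN xv_diff_measurable] by simp
  show "slice d (\<lambda>t x v. h1 t x v + h2 t x v) t x v differentiable (at 0)"
    if "d \<noteq> Dt" "0 \<le> t" "t < Tb" for d t x v
    using DERIV_add[OF xv_diff_has_derivative[OF assms(1) that, of x v]
        xv_diff_has_derivative[OF assms(2) that, of x v]]
    by (auto simp: slice_comp2 real_differentiable_def)
qed

lemma pdir_add:
  assumes "xv_diff Tb h1" "xv_diff Tb h2" "d \<noteq> Dt" "0 \<le> t" "t < Tb"
  shows "pdir d (\<lambda>t x v. h1 t x v + h2 t x v) t x v = pdir d h1 t x v + pdir d h2 t x v"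
  using DERIV_add[OF xv_diff_has_derivative[OF assms(1,3-5), of x v]
      xv_diff_has_derivative[OF assms(2,3-5), of x v]]
  by (simp add: pdir_eq_deriv_slice[OF assms(3)] slice_comp2 DERIV_imp_deriv)

lemma xv_regular_add:
  "xv_regular Tb n h1 \<Longrightarrow> xv_regular Tb n h2 \<Longrightarrow> xv_regular Tb n (\<lambda>t x v. h1 t x v + h2 t x v)"
proof (induction n arbitrary: h1 h2)
  case 0
  then show ?case by (simp add: xv_diff_add)
next
  case (Suc n)
  then have diff: "xv_diff Tb h1" "xv_diff Tb h2" by auto
  have "xv_regular Tb n (pdir d (\<lambda>t x v. h1 t x v + h2 t x v))" if "d \<noteq> Dt" for d
    using Suc.IH[of "pdir d h1" "pdir d h2"] Suc.prems that
    by (auto intro: xv_regular_cong simp: pdir_add[OF diff that])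
  then show ?case using diff by (simp add: xv_diff_add)
qed

lemma xv_diff_mult:
  assumes "xv_diff Tb h1" "xv_diff Tb h2"
  shows "xv_diff Tb (\<lambda>t x v. h1 t x v * h2 t x v)"
proof (rule xv_diffI)
  have "(\<lambda>(t, x, v). indicator {0..<Tb} t * (h1 t x v * h2 t x v))
      = (\<lambda>p. (\<lambda>(t, x, v). indicator {0..<Tb} t * h1 t x v) p
             * (\<lambda>(t, x, v). indicator {0..<Tb} t * h2 t x v) p)"
    by (auto simp: indicator_def)
  then show "(\<lambda>(t, x, v). indicator {0..<Tb} t * (h1 t x v * h2 t x v)) \<in> borel_measurable borel"
    using assms[THEN xv_diff_measurable] by simp
  show "slice d (\<lambda>t x v. h1 t x v * h2 t x v) t x v differentiable (at 0)"
    if "d \<noteq> Dt" "0 \<le> t" "t < Tb" for d t x v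
    using DERIV_mult[OF xv_diff_has_derivative[OF assms(1) that, of x v]
        xv_diff_has_derivative[OF assms(2) that, of x v]]
    by (auto simp: slice_comp2 real_differentiable_def)
qed

lemma pdir_mult:
  assumes "xv_diff Tb h1" "xv_diff Tb h2" "d \<noteq> Dt" "0 \<le> t" "t < Tb"
  shows "pdir d (\<lambda>t x v. h1 t x v * h2 t x v) t x v
       = pdir d h1 t x v * h2 t x v + h1 t x v * pdir d h2 t x v"
  using DERIV_mult[OF xv_diff_has_derivative[OF assms(1,3-5), of x v]
      xv_diff_has_derivative[OF assms(2,3-5), of x v]]
  by (simp add: pdir_eq_deriv_slice[OF assms(3)] slice_comp2 DERIV_imp_deriv)

lemma xv_regular_mult:
  "xv_regular Tb n h1 \<Longrightarrow> xv_regular Tb n h2 \<Longrightarrow> xv_regular Tb n (\<lambda>t x v. h1 t x v * h2 t x v)"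
proof (induction n arbitrary: h1 h2)
  case 0
  then show ?case by (simp add: xv_diff_mult)
next
  case (Suc n)
  then have diff: "xv_diff Tb h1" "xv_diff Tb h2" by auto
  have lower: "xv_regular Tb n h1" "xv_regular Tb n h2"
    using Suc.prems xv_regular_Suc_imp by blast+
  have "xv_regular Tb n (pdir d (\<lambda>t x v. h1 t x v * h2 t x v))" if "d \<noteq> Dt" for d
    using Suc.IH[of "pdir d h1" h2] Suc.IH[of h1 "pdir d h2"] Suc.prems lower that
    by (auto intro: xv_regular_cong xv_regular_add simp: pdir_mult[OF diff that])
  then show ?case using diff by (simp add: xv_diff_mult)
qed

lemma xv_diff_time_fun:
  assumes "c \<in> borel_measurable borel"
  shows "xv_diff Tb (\<lambda>t x v. c t)"
proof (rule xv_diffI)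
  show "(\<lambda>(t, x::real^3, v::real^3). indicator {0..<Tb} t * c t) \<in> borel_measurable borel"
    using assms
    by (intro borel_measurable_indicator_time_mult)
       (auto simp: split_beta' intro: borel_measurable_fst_comp)
qed (simp add: slice_time_fun)

lemma pdir_time_fun: "d \<noteq> Dt \<Longrightarrow> pdir d (\<lambda>t x v. c t) = (\<lambda>t x v. 0)"
  by (intro ext) (simp add: pdir_eq_deriv_slice slice_time_fun)

lemma xv_regular_time_fun:
  "c \<in> borel_measurable borel \<Longrightarrow> xv_regular Tb n (\<lambda>t x v. c t)"
proof (induction n arbitrary: c)
  case 0
  then show ?case by (simp add: xv_diff_time_fun)
next
  case (Suc n)
  have "xv_regular Tb n (\<lambda>t x v. (\<lambda>_. 0) t)" by (rule Suc.IH) simp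
  then show ?case using Suc.prems by (simp add: xv_diff_time_fun pdir_time_fun)
qed

lemma slice_v_component_has_derivative:
  "(slice d (\<lambda>t x v. v $ i) t x v has_real_derivative
     (case d of Dv l \<Rightarrow> axis l 1 $ i | _ \<Rightarrow> 0)) (at 0)"
  by (cases d) (auto simp: slice_def intro!: derivative_eq_intros)

lemma xv_regular_v_component: "xv_regular Tb n (\<lambda>t x v. v $ i)"
proof -
  have "xv_diff Tb (\<lambda>t x v. v $ i)"
  proof (rule xv_diffI)
    show "(\<lambda>(t, x::real^3, v::real^3). indicator {0..<Tb} t * v $ i) \<in> borel_measurable borel"
      by (rule borel_measurable_indicator_time_mult)
         (auto simp: split_beta' intro!: borel_measurable_continuous_onI continuous_intros)
    show "slice d (\<lambda>t x v. v $ i) t x v differentiable (at 0)" for d t x v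
      unfolding real_differentiable_def using slice_v_component_has_derivative by blast
  qed
  moreover have "pdir d (\<lambda>t x v. v $ i) = (\<lambda>t x v. (\<lambda>_. case d of Dv l \<Rightarrow> axis l 1 $ i | _ \<Rightarrow> 0) t)"
    if "d \<noteq> Dt" for d
    using that slice_v_component_has_derivative
    by (intro ext) (simp add: pdir_eq_deriv_slice DERIV_imp_deriv)
  ultimately show ?thesis
    by (cases n) (auto intro: xv_regular_time_fun)
qed

lemma xv_diff_comp:
  assumes h: "xv_diff Tb h" and \<phi>: "\<phi> \<in> borel_measurable borel"
    and deriv: "\<And>t x v. 0 \<le> t \<Longrightarrow> t < Tb \<Longrightarrow> (\<phi> has_real_derivative \<phi>' (h t x v)) (at (h t x v))"
  shows "xv_diff Tb (\<lambda>t x v. \<phi> (h t x v))"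
proof (rule xv_diffI)
  have ind: "(\<lambda>(t, x::real^3, v::real^3). indicator {0..<Tb} t :: real) \<in> borel_measurable borel"
    using borel_measurable_indicator_time_mult[of "{0..<Tb}" "\<lambda>_ _ _. 1 :: real"] by simp
  have "(\<lambda>(t, x, v). indicator {0..<Tb} t * \<phi> (h t x v))
      = (\<lambda>p. (\<lambda>(t, x, v). indicator {0..<Tb} t) p
             * \<phi> ((\<lambda>(t, x, v). indicator {0..<Tb} t * h t x v) p))"
    by (auto simp: indicator_def)
  also have "\<dots> \<in> borel_measurable borel"
    by (rule borel_measurable_times[OF ind measurable_compose[OF xv_diff_measurable[OF h] \<phi>]])
  finally show "(\<lambda>(t, x, v). indicator {0..<Tb} t * \<phi> (h t x v)) \<in> borel_measurable borel" .
  show "slice d (\<lambda>t x v. \<phi> (h t x v)) t x v differentiable (at 0)"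
    if "d \<noteq> Dt" "0 \<le> t" "t < Tb" for d t x v
  proof -
    have "(\<phi> has_real_derivative \<phi>' (h t x v)) (at (slice d h t x v 0))"
      using deriv[OF that(2,3)] by simp
    from DERIV_chain2[OF this xv_diff_has_derivative[OF h that, of x v]] show ?thesis
      by (auto simp: slice_comp1 real_differentiable_def)
  qed
qed

lemma pdir_comp:
  assumes h: "xv_diff Tb h" and "d \<noteq> Dt" "0 \<le> t" "t < Tb"
    and "(\<phi> has_real_derivative D) (at (h t x v))"
  shows "pdir d (\<lambda>t x v. \<phi> (h t x v)) t x v = D * pdir d h t x v"
proof -
  have "(\<phi> has_real_derivative D) (at (slice d h t x v 0))"
    using assms(5) by simp
  from DERIV_chain2[OF this xv_diff_has_derivative[OF h assms(2-4), of x v]] show ?thesis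
    by (simp add: pdir_eq_deriv_slice[OF assms(2)] slice_comp1 DERIV_imp_deriv)
qed

lemma xv_regular_exp: "xv_regular Tb n h \<Longrightarrow> xv_regular Tb n (\<lambda>t x v. exp (h t x v))"
proof (induction n arbitrary: h)
  case 0
  then show ?case by (simp add: xv_diff_comp[where \<phi>=exp and \<phi>'=exp, OF _ _ DERIV_exp])
next
  case (Suc n)
  then have diff: "xv_diff Tb h" by simp
  have "xv_regular Tb n (pdir d (\<lambda>t x v. exp (h t x v)))" if "d \<noteq> Dt" for d
  proof (rule xv_regular_cong)
    show "xv_regular Tb n (\<lambda>t x v. exp (h t x v) * pdir d h t x v)"
      using Suc.IH[OF xv_regular_Suc_imp[OF Suc.prems]] Suc.prems that
      by (simp add: xv_regular_mult)
    show "pdir d (\<lambda>t x v. exp (h t x v)) t x v = exp (h t x v) * pdir d h t x v"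
      if "0 \<le> t" "t < Tb" for t x v
      by (rule pdir_comp[OF diff \<open>d \<noteq> Dt\<close> that DERIV_exp])
  qed
  then show ?case using diff by (simp add: xv_diff_comp[where \<phi>=exp and \<phi>'=exp, OF _ _ DERIV_exp])
qed

lemma xv_regular_powr:
  "xv_regular Tb n h \<Longrightarrow> (\<And>t x v. 0 \<le> t \<Longrightarrow> t < Tb \<Longrightarrow> 0 < h t x v)
    \<Longrightarrow> xv_regular Tb n (\<lambda>t x v. h t x v powr p)"
proof (induction n arbitrary: h p)
  case 0
  then show ?case
    by (simp add: xv_diff_comp[where \<phi>'="\<lambda>y. p * y powr (p - 1)", OF _ _ has_real_derivative_powr])
next
  case (Suc n)
  then have diff: "xv_diff Tb h" by simp
  have "xv_regular Tb n (pdir d (\<lambda>t x v. h t x v powr p))" if "d \<noteq> Dt" for d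
  proof (rule xv_regular_cong)
    show "xv_regular Tb n (\<lambda>t x v. (\<lambda>_. p) t * (h t x v powr (p - 1) * pdir d h t x v))"
      using Suc.IH[OF xv_regular_Suc_imp[OF Suc.prems(1)]] Suc.prems that
      by (intro xv_regular_mult xv_regular_time_fun) auto
    show "pdir d (\<lambda>t x v. h t x v powr p) t x v
        = (\<lambda>_. p) t * (h t x v powr (p - 1) * pdir d h t x v)"
      if "0 \<le> t" "t < Tb" for t x v
      using pdir_comp[OF diff \<open>d \<noteq> Dt\<close> that has_real_derivative_powr[OF Suc.prems(2)[OF that]]]
      by simp
  qed
  then show ?case
    using diff Suc.prems(2)
    by (simp add: xv_diff_comp[where \<phi>'="\<lambda>y. p * y powr (p - 1)", OF _ _ has_real_derivative_powr])
qed

lemma xv_diff_spatial_derivative: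
  assumes "regular Tb f" "Dt \<notin> set ds"
  shows "xv_diff Tb (applyD ds f)"
proof (rule xv_diffI)
  have "continuous_on ({0..<Tb} \<times> UNIV) (\<lambda>p. applyD ds f (fst p) (fst (snd p)) (snd (snd p)))"
    using assms unfolding regular_def by blast
  then have "(\<lambda>p. indicator ({0..<Tb} \<times> UNIV) p *\<^sub>R applyD ds f (fst p) (fst (snd p)) (snd (snd p)))
      \<in> borel_measurable borel"
    by (intro borel_measurable_continuous_on_indicator) (auto intro: slab_borel)
  then show "(\<lambda>(t, x, v). indicator {0..<Tb} t * applyD ds f t x v) \<in> borel_measurable borel"
    by (simp add: split_beta' indicator_times)
  show "slice d (applyD ds f) t x v differentiable (at 0)" if "d \<noteq> Dt" "0 \<le> t" "t < Tb" for d t x v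
    using assms that slice_diff_iff[OF that(1)] unfolding regular_def by blast
qed

lemma xv_regular_spatial_derivative:
  "regular Tb f \<Longrightarrow> Dt \<notin> set ds \<Longrightarrow> xv_regular Tb n (applyD ds f)"
proof (induction n arbitrary: ds)
  case 0
  then show ?case by (simp add: xv_diff_spatial_derivative)
next
  case (Suc n)
  have "xv_regular Tb n (pdir d (applyD ds f))" if "d \<noteq> Dt" for d
    using Suc.IH[of "d # ds"] Suc.prems that by (simp add: applyD_def)
  then show ?case using Suc.prems by (simp add: xv_diff_spatial_derivative)
qed

definition xv_smooth :: "real \<Rightarrow> txv_fun \<Rightarrow> bool" where
  "xv_smooth Tb h \<longleftrightarrow> (\<forall>n. xv_regular Tb n h)"

lemma xv_smooth_imp_xv_diff: "xv_smooth Tb h \<Longrightarrow> xv_diff Tb h"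
  unfolding xv_smooth_def using xv_regular.simps(1) by blast

lemma xv_smooth_pdir: "xv_smooth Tb h \<Longrightarrow> d \<noteq> Dt \<Longrightarrow> xv_smooth Tb (pdir d h)"
  unfolding xv_smooth_def by (metis xv_regular.simps(2))

lemma xv_smooth_Yop:
  assumes "xv_smooth Tb h"
  shows "xv_smooth Tb (Yop l h)"
proof -
  have "xv_regular Tb n (pdir (Dx l) h)" "xv_regular Tb n (pdir (Dv l) h)" for n
    using xv_smooth_pdir[OF assms] unfolding xv_smooth_def by blast+
  then have "xv_regular Tb n
      (\<lambda>t x v. (\<lambda>t. t + 1) t * pdir (Dx l) h t x v + pdir (Dv l) h t x v)" for n
    by (intro xv_regular_add xv_regular_mult xv_regular_time_fun) auto
  then show ?thesis
    unfolding xv_smooth_def Yop_def by simp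
qed

lemma xv_smooth_mop:
  assumes "\<And>l h. xv_smooth Tb h \<Longrightarrow> xv_smooth Tb (P l h)" "xv_smooth Tb h"
  shows "xv_smooth Tb (mop P a h)"
proof -
  have iter: "xv_smooth Tb ((Q ^^ k) h)"
    if "\<And>h. xv_smooth Tb h \<Longrightarrow> xv_smooth Tb (Q h)" "xv_smooth Tb h" for Q k h
    using that by (induction k) auto
  show ?thesis
    unfolding mop_def by (intro iter assms)
qed

lemma xv_smooth_Dop: "xv_smooth Tb h \<Longrightarrow> xv_smooth Tb (Dop a b s h)"
  unfolding Dop_def by (intro xv_smooth_mop xv_smooth_pdir xv_smooth_Yop) auto

lemma xv_regular_jb: "xv_regular Tb n (\<lambda>t x v. jb v)"
proof -
  have "jb v = ((\<lambda>_. 1) t + (v $ 1 * v $ 1 + v $ 2 * v $ 2 + v $ 3 * v $ 3)) powr (1/2)"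
    for t :: real and v :: "real^3"
    by (simp add: jb_def powr_half_sqrt add_pos_nonneg norm_vec_def L2_set_def sum_3
        power2_eq_square)
  moreover have "xv_regular Tb n
      (\<lambda>t x v. ((\<lambda>_. 1) t + (v $ 1 * v $ 1 + v $ 2 * v $ 2 + v $ 3 * v $ 3)) powr (1/2))"
    by (intro xv_regular_powr xv_regular_add xv_regular_mult xv_regular_v_component
        xv_regular_time_fun)
       (auto simp: add_pos_nonneg)
  ultimately show ?thesis by simp
qed

lemma xv_smooth_gfun:
  assumes "regular Tb f"
  shows "xv_smooth Tb (gfun d0 \<delta> f)"
proof -
  have "dfun d0 \<delta> \<in> borel_measurable borel"
    unfolding dfun_def by measurable
  then have "xv_regular Tb n (\<lambda>t x v. exp (dfun d0 \<delta> t * jb v) * f t x v)" for n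
    using xv_regular_spatial_derivative[OF assms, of "[]"]
    by (intro xv_regular_mult xv_regular_exp xv_regular_jb xv_regular_time_fun)
       (simp_all add: applyD_def)
  then show ?thesis
    unfolding xv_smooth_def gfun_def by simp
qed

lemma jb_neq_zero [simp]: "jb z \<noteq> 0"
  using one_le_jb[of z] by linarith

lemma continuous_on_jb [continuous_intros]: "continuous_on S f \<Longrightarrow> continuous_on S (\<lambda>x. jb (f x))"
  unfolding jb_def by (intro continuous_intros)

lemma dissip_density_measurable:
  assumes "xv_diff Tb (Dop a b s g)" "T < Tb"
  shows "(\<lambda>(t, x, v). indicator {0..T} t * dissip_density \<delta> a b s g t x v) \<in> borel_measurable borel"
proof -
  define w where "w t x v = (1 + t) powr (- (1 + \<delta>) / 2) * (jb v powr (1/2) * W a b s t x v)"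
    for t :: real and x v :: "real^3"
  have "(\<lambda>p::real \<times> (real^3) \<times> (real^3). (1 + fst p) powr (- (1 + \<delta>) / 2)) \<in> borel_measurable borel"
    by (intro powr_real_measurable borel_measurable_const borel_measurable_continuous_onI
        continuous_intros)
  moreover have "(\<lambda>p::real \<times> (real^3) \<times> (real^3). jb (snd (snd p)) powr (1/2)
      * W a b s (fst p) (fst (snd p)) (snd (snd p))) \<in> borel_measurable borel"
    unfolding W_def by (intro borel_measurable_continuous_onI continuous_intros) auto
  ultimately have "(\<lambda>(t, x, v). w t x v) \<in> borel_measurable borel"
    unfolding w_def split_beta' by (rule borel_measurable_times)
  then have "(\<lambda>(t, x, v). indicator {0..T} t * w t x v) \<in> borel_measurable borel"
    by (intro borel_measurable_indicator_time_mult) auto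
  from borel_measurable_times[OF this xv_diff_measurable[OF assms(1)]]
  have "(\<lambda>p. (\<lambda>(t, x, v). indicator {0..T} t * w t x v) p
           * (\<lambda>(t, x, v). indicator {0..<Tb} t * Dop a b s g t x v) p) \<in> borel_measurable borel" .
  also have "(\<lambda>p. (\<lambda>(t, x, v). indicator {0..T} t * w t x v) p
           * (\<lambda>(t, x, v). indicator {0..<Tb} t * Dop a b s g t x v) p)
      = (\<lambda>(t, x, v). indicator {0..T} t * dissip_density \<delta> a b s g t x v)"
    using assms(2) by (auto simp: dissip_density_def w_def indicator_def mult_ac)
  finally show ?thesis .
qed

definition lower_indices :: "nat^3 \<Rightarrow> nat^3 \<Rightarrow> ((nat^3) \<times> (nat^3)) set" where
  "lower_indices a b = {(a', b'). mlen a' \<le> mlen a + 1 \<and> mlen b' + 1 \<le> mlen b}"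

lemma finite_mlen_le: "finite {a :: nat^3. mlen a \<le> k}"
proof (rule finite_subset)
  show "{a :: nat^3. mlen a \<le> k} \<subseteq> vec_lambda ` (UNIV \<rightarrow>\<^sub>E {..k})"
  proof
    fix a :: "nat^3"
    assume "a \<in> {a. mlen a \<le> k}"
    then have "a $ i \<le> k" for i
      using member_le_sum[of i UNIV "\<lambda>i. a $ i"] unfolding mlen_def by simp
    then show "a \<in> vec_lambda ` (UNIV \<rightarrow>\<^sub>E {..k})"
      by (intro image_eqI[of _ _ "\<lambda>i. a $ i"]) auto
  qed
  show "finite (vec_lambda ` (UNIV \<rightarrow>\<^sub>E {..k}) :: (nat^3) set)"
    by (intro finite_imageI finite_PiE) auto
qed

lemma lower_indices_subset:
  "mlen a < k \<Longrightarrow> mlen b \<le> k \<Longrightarrow> lower_indices a b \<subseteq> {a'. mlen a' \<le> k} \<times> {b'. mlen b' \<le> k}"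
  unfolding lower_indices_def by auto

lemma card_mlen_le_pos: "0 < card ({a'. mlen a' \<le> k} \<times> {b' :: nat^3. mlen b' \<le> k})"
  using finite_mlen_le by (auto simp: card_gt_0_iff mlen_def intro!: exI[of _ 0])

lemma sum_weighted_products_le:
  fixes g :: txv_fun
  assumes g: "xv_smooth Tb g" and ab: "mlen a < k" "mlen b \<le> k"
    and \<eta>: "0 < \<eta>" and T: "0 \<le> T" "T < Tb" and \<delta>: "-1 \<le> \<delta>"
  defines "N \<equiv> card ({a'. mlen a' \<le> k} \<times> {b' :: nat^3. mlen b' \<le> k})"
  shows "(\<Sum>(a', b')\<in>lower_indices a b.
            L1_txv {0..T} (\<lambda>t x v. (W a b s t x v)\<^sup>2 * \<bar>Dop a b s g t x v\<bar> * \<bar>Dop a' b' s g t x v\<bar>))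
    \<le> ennreal \<eta> * sq_txv {0..T} (dissip_density \<delta> a b s g)
      + ennreal (N / (4 * \<eta>)) * ennreal ((1 + T) powr (2 * (1 + \<delta>)))
        * (\<Sum>(a', b')\<in>lower_indices a b. sq_txv {0..T} (dissip_density \<delta> a' b' s g))"
proof -
  let ?I = "lower_indices a b" and ?Q = "\<lambda>a' b'. sq_txv {0..T} (dissip_density \<delta> a' b' s g)"
  define e where "e = \<eta> / N"
  define P where "P = (1 + T) powr (2 * (1 + \<delta>))"
  have fin: "finite ({a'. mlen a' \<le> k} \<times> {b' :: nat^3. mlen b' \<le> k})"
    using finite_mlen_le by blast
  have "N > 0"
    unfolding N_def by (rule card_mlen_le_pos)
  then have "0 < e" and eN: "real N * e = \<eta>"
    using \<eta> by (simp_all add: e_def)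
  have "card ?I \<le> N"
    using card_mono[OF fin lower_indices_subset[OF ab]] unfolding N_def .
  have measurable:
    "(\<lambda>(t, x, v). indicator {0..T} t * dissip_density \<delta> a' b' s g t x v) \<in> borel_measurable borel"
    for a' b'
    using g xv_smooth_Dop xv_smooth_imp_xv_diff T by (blast intro: dissip_density_measurable)
  have "(\<Sum>(a', b')\<in>?I.
            L1_txv {0..T} (\<lambda>t x v. (W a b s t x v)\<^sup>2 * \<bar>Dop a b s g t x v\<bar> * \<bar>Dop a' b' s g t x v\<bar>))
      \<le> (\<Sum>(a', b')\<in>?I. ennreal e * ?Q a b + ennreal (P / (4 * e)) * ?Q a' b')"
  proof (rule sum_mono, clarify)
    fix a' b' assume "(a', b') \<in> ?I"
    then have "mlen a' \<le> mlen a + 1" "mlen b' + 1 \<le> mlen b"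
      by (auto simp: lower_indices_def)
    with \<open>0 < e\<close> T \<delta> show
      "L1_txv {0..T} (\<lambda>t x v. (W a b s t x v)\<^sup>2 * \<bar>Dop a b s g t x v\<bar> * \<bar>Dop a' b' s g t x v\<bar>)
        \<le> ennreal e * ?Q a b + ennreal (P / (4 * e)) * ?Q a' b'"
      unfolding P_def
      by (intro L1_txv_le_sq_txv weighted_product_le measurable) auto
  qed
  also have "\<dots> = of_nat (card ?I) * ennreal e * ?Q a b
      + ennreal (P / (4 * e)) * (\<Sum>(a', b')\<in>?I. ?Q a' b')"
    by (simp add: sum.distrib sum_distrib_left case_prod_beta' mult.assoc)
  also have "\<dots> \<le> ennreal \<eta> * ?Q a b + ennreal (P / (4 * e)) * (\<Sum>(a', b')\<in>?I. ?Q a' b')"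
  proof -
    have "of_nat (card ?I) * ennreal e = ennreal (real (card ?I) * e)"
      using \<open>0 < e\<close> by (simp add: ennreal_mult ennreal_of_nat_eq_real_of_nat)
    also have "\<dots> \<le> ennreal \<eta>"
      using \<open>card ?I \<le> N\<close> \<open>0 < e\<close> eN
      by (intro ennreal_leI) (metis mult_right_mono of_nat_le_iff less_imp_le)
    finally show ?thesis
      by (intro add_right_mono mult_right_mono) simp_all
  qed
  also have "ennreal (P / (4 * e)) = ennreal (N / (4 * \<eta>)) * ennreal P"
    using \<eta> \<open>N > 0\<close> by (simp add: e_def P_def ennreal_mult[symmetric] field_simps)
  finally show ?thesis
    unfolding P_def .
qed

lemma bootstrap_imp_regular:
  "bootstrap \<gamma> d0 \<delta> \<epsilon>0 \<epsilon> fini Tb f \<Longrightarrow> regular Tb f \<and> 0 < \<delta>"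
  by (simp add: bootstrap_def landau_solution_def)

theorem proposition7p2:
  fixes \<gamma> d0 :: real
  assumes "0 \<le> \<gamma>" and "\<gamma> < 1" and "0 < d0"
  shows "\<exists>\<epsilon>0>0. \<forall>\<eta>>0. \<exists>C>0.
    \<forall>a b s \<delta> \<epsilon> fini Tb f T.
      mlen a + mlen b + mlen s \<le> 10 \<longrightarrow>
      bootstrap \<gamma> d0 \<delta> \<epsilon>0 \<epsilon> fini Tb f \<longrightarrow>
      0 \<le> T \<longrightarrow> T < Tb \<longrightarrow>
      (let g = gfun d0 \<delta> f;
           Q = (\<lambda>a' b'. sq_txv {0..T}
                  (\<lambda>t x v. (1 + t) powr (- (1 + \<delta>) / 2) * jb v powr (1/2)
                           * W a' b' s t x v * Dop a' b' s g t x v))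
       in (\<Sum>(a', b')\<in>{(a', b'). mlen a' \<le> mlen a + 1 \<and> mlen b' + 1 \<le> mlen b}.
             L1_txv {0..T} (\<lambda>t x v. (W a b s t x v)\<^sup>2 * \<bar>Dop a b s g t x v\<bar> * \<bar>Dop a' b' s g t x v\<bar>))
          \<le> ennreal \<eta> * Q a b
             + ennreal C * ennreal ((1 + T) powr (2 * (1 + \<delta>)))
               * (\<Sum>(a', b')\<in>{(a', b'). mlen a' \<le> mlen a + 1 \<and> mlen b' + 1 \<le> mlen b}. Q a' b'))"
  \<comment> \<open>Any \<open>\<epsilon>0\<close> works: only the regularity of f and \<open>\<delta> > 0\<close> enter.\<close>
  apply (rule exI[of _ 1], intro conjI zero_less_one allI impI)
  subgoal premises \<eta> for \<eta>
    apply (intro exI[of _ "card ({a'. mlen a' \<le> 11} \<times> {b' :: nat^3. mlen b' \<le> 11}) / (4 * \<eta>)"]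
        conjI allI impI)
     apply (simp add: card_mlen_le_pos \<eta>)
    apply (unfold Let_def)
    apply (rule sum_weighted_products_le[where k = 11,
          unfolded lower_indices_def dissip_density_def])
    apply (auto dest: bootstrap_imp_regular intro: xv_smooth_gfun simp: \<eta>)
    done
  done

end
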